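(* For every simple type $A$ there exists a profinite $\lambda$-term $\Omega_A \in \widehat{\Lambda}((A \Rightarrow A) \Rightarrow A \Rightarrow A)$ such that for every $M \in \widehat{\Lambda}(A \Rightarrow A)$, the profinite $\lambda$-term $\Omega_A\,M \in \widehat{\Lambda}(A\Rightarrow A)$ satisfies the idempotency equation $(\Omega_A\,M) \circ (\Omega_A\,M) = \Omega_A\,M$.
   Context: Simple types are generated from a base type $o$ by $\Rightarrow$; $\Lambda(A)$ is the set of closed simply typed $\lambda$-terms of type $A$ modulo $\beta\eta$. For a finite set $Q$: $[\![o]\!]_Q = Q$, $[\![A\Rightarrow B]\!]_Q$ = all functions $[\![A]\!]_Q\to[\![B]\!]_Q$, $[\![M]\!]_Q$ the standard interpretation, $D_Q(A) = \{[\![M]\!]_Q : M\in\Lambda(A)\}$. Logical relations: for $R\subseteq Q\times Q'$, $[\![o]\!]_R = R$, $[\![A\Rightarrow B]\!]_R = \{(g,h) : \forall (x,y)\in[\![A]\!]_R,\ (g(x),h(y))\in[\![B]\!]_R\}$. A partial surjection $f\colon Q\twoheadrightarrow Q'$ is the graph of a partial function surjective onto $Q'$. A profinite $\lambda$-term of type $A$ is a family $\theta=(\theta_Q)$ over finite sets $Q$ with $\theta_Q\in D_Q(A)$ and $(\theta_Q,\theta_{Q'})\in[\![A]\!]_f$ for every partial surjection $f\colon Q\twoheadrightarrow Q'$; $\widehat{\Lambda}(A)$ denotes their set. Application and composition of profinite $\lambda$-terms are computed componentwise: for $\Phi\in\widehat{\Lambda}(B\Rightarrow C)$ and $\psi\in\widehat{\Lambda}(B)$,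 $(\Phi\,\psi)_Q = \Phi_Q(\psi_Q)$; for $u, v \in \widehat{\Lambda}(A\Rightarrow A)$, $u \circ v$ denotes the profinite $\lambda$-term $\lambda x.\,v(u\,x)$, i.e. $(u\circ v)_Q = v_Q \circ u_Q$. *)

theory Defs
  imports "HOL-Library.FSet"
begin

datatype ty = Base | Arr ty ty

datatype tm = Var nat | Lam ty tm | App tm tm

inductive typing :: "ty list \<Rightarrow> tm \<Rightarrow> ty \<Rightarrow> bool" where
  t_var: "i < length \<Gamma> \<Longrightarrow> \<Gamma> ! i = T \<Longrightarrow> typing \<Gamma> (Var i) T"
| t_lam: "typing (T # \<Gamma>) M U \<Longrightarrow> typing \<Gamma> (Lam T M) (Arr T U)"
| t_app: "typing \<Gamma> M (Arr T U) \<Longrightarrow> typing \<Gamma> N T \<Longrightarrow> typing \<Gamma> (App M N) U"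

datatype val = Atom nat | Fn "(val \<times> val) fset"

fun app :: "val \<Rightarrow> val \<Rightarrow> val" where
  "app (Fn g) x = (THE y. (x, y) |\<in>| g)"
| "app (Atom a) x = undefined"

fun tyint :: "nat set \<Rightarrow> ty \<Rightarrow> val set" where
  "tyint Q Base = Atom ` Q"
| "tyint Q (Arr A B) =
     {Fn g | g. fset g \<subseteq> tyint Q A \<times> tyint Q B \<and>
                (\<forall>x\<in>tyint Q A. \<exists>!y. (x, y) |\<in>| g)}"

primrec sem :: "nat set \<Rightarrow> tm \<Rightarrow> val list \<Rightarrow> val" where
  "sem Q (Var n) \<rho> = \<rho> ! n"
| "sem Q (Lam T M) \<rho> = Fn (Abs_fset ((\<lambda>x. (x, sem Q M (x # \<rho>))) ` tyint Q T))"
| "sem Q (App M N) \<rho> = app (sem Q M \<rho>) (sem Q N \<rho>)"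

definition D :: "nat set \<Rightarrow> ty \<Rightarrow> val set" where
  "D Q A = {sem Q M [] | M. typing [] M A}"

fun lrel :: "nat set \<Rightarrow> nat set \<Rightarrow> (nat \<times> nat) set \<Rightarrow> ty \<Rightarrow> (val \<times> val) set" where
  "lrel Q Q' R Base = {(Atom a, Atom b) | a b. (a, b) \<in> R}"
| "lrel Q Q' R (Arr A B) =
     {(g, h). g \<in> tyint Q (Arr A B) \<and> h \<in> tyint Q' (Arr A B) \<and>
        (\<forall>(x, y) \<in> lrel Q Q' R A. (app g x, app h y) \<in> lrel Q Q' R B)}"

definition partial_surj :: "nat set \<Rightarrow> nat set \<Rightarrow> (nat \<times> nat) set \<Rightarrow> bool" where
  "partial_surj Q Q' R \<longleftrightarrow> R \<subseteq> Q \<times> Q' \<and> single_valued R \<and> Range R = Q'"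

definition profinite :: "ty \<Rightarrow> (nat set \<Rightarrow> val) \<Rightarrow> bool" where
  "profinite A \<theta> \<longleftrightarrow>
     (\<forall>Q. finite Q \<longrightarrow> \<theta> Q \<in> D Q A) \<and>
     (\<forall>Q Q' R. finite Q \<and> finite Q' \<and> partial_surj Q Q' R \<longrightarrow> (\<theta> Q, \<theta> Q') \<in> lrel Q Q' R A)"

definition papp :: "(nat set \<Rightarrow> val) \<Rightarrow> (nat set \<Rightarrow> val) \<Rightarrow> nat set \<Rightarrow> val" where
  "papp \<Phi> \<psi> Q = app (\<Phi> Q) (\<psi> Q)"

text \<open>vcomp u v is the graph of v o u (first u, then v).\<close>
fun vcomp :: "val \<Rightarrow> val \<Rightarrow> val" where
  "vcomp (Fn g) v = Fn ((\<lambda>(x, y). (x, app v y)) |`| g)"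
| "vcomp (Atom a) v = undefined"

text \<open>u o v = lambda x. v (u x), i.e. (u o v)_Q = v_Q o u_Q.\<close>
definition pcomp :: "(nat set \<Rightarrow> val) \<Rightarrow> (nat set \<Rightarrow> val) \<Rightarrow> nat set \<Rightarrow> val" where
  "pcomp u v Q = vcomp (u Q) (v Q)"

end

theory Submission
  imports Defs
begin

text \<open>Take \<open>\<Omega>\<^sub>Q\<close> to be the Church numeral \<open>N\<^sub>Q = |\<lbrakk>A\<rbrakk>\<^sub>Q|!\<close>. For a self-map \<open>h\<close> of a
  finite set of size \<open>k\<close> every orbit enters a cycle within \<open>k\<close> steps and has period at most
  \<open>k\<close>, so \<open>h\<^bsup>k! c\<^esup> = h\<^bsup>k!\<^esup>\<close> for all \<open>c \<ge> 1\<close>; with \<open>c = 2\<close> this is idempotency. The same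
  fact gives parametricity: on related arguments \<open>\<Omega>\<^sub>Q\<close> and \<open>\<Omega>\<^sub>Q\<^sub>'\<close> both act as the
  common iterate \<open>N\<^sub>Q N\<^sub>Q\<^sub>'\<close>, and iterates of related functions are related.\<close>

lemma funpow_closed: "(\<And>y. y \<in> S \<Longrightarrow> h y \<in> S) \<Longrightarrow> x \<in> S \<Longrightarrow> (h ^^ n) x \<in> S"
  by (induction n) auto

lemma funpow_cycle_bound:
  assumes "finite S" "\<And>y. y \<in> S \<Longrightarrow> h y \<in> S" "x \<in> S"
  obtains i p where "0 < p" "i + p \<le> card S" "(h ^^ (i + p)) x = (h ^^ i) x"
proof -
  have "\<not> inj_on (\<lambda>i. (h ^^ i) x) {0..card S}"
  proof
    assume "inj_on (\<lambda>i. (h ^^ i) x) {0..card S}"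
    then have "card {0..card S} \<le> card S"
      using assms by (intro card_inj_on_le) (auto intro: funpow_closed)
    then show False by simp
  qed
  then obtain i j where "i < j" "j \<le> card S" "(h ^^ j) x = (h ^^ i) x"
    unfolding inj_on_def by (metis atLeastAtMost_iff linorder_neqE_nat)
  then show thesis
    by (intro that[of "j - i" i]) auto
qed

lemma funpow_periodic:
  fixes h :: "'a \<Rightarrow> 'a"
  assumes cycle: "(h ^^ (i + p)) x = (h ^^ i) x" and "i \<le> m"
  shows "(h ^^ (m + t * p)) x = (h ^^ m) x"
proof -
  have orbit: "(h ^^ (i + t * p)) x = (h ^^ i) x" for t
  proof (induction t)
    case (Suc t)
    have "(h ^^ (i + Suc t * p)) x = (h ^^ (t * p)) ((h ^^ (i + p)) x)"
      by (metis add.commute add.left_commute comp_apply funpow_add mult_Suc)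
    also have "\<dots> = (h ^^ (i + t * p)) x"
      by (metis add.commute comp_apply cycle funpow_add)
    finally show ?case using Suc.IH by simp
  qed simp
  have "(h ^^ (m + t * p)) x = (h ^^ ((m - i) + (i + t * p))) x"
    using \<open>i \<le> m\<close> by simp
  also have "\<dots> = (h ^^ (m - i)) ((h ^^ i) x)"
    by (simp only: funpow_add[of "m - i" _ h] comp_apply orbit)
  also have "\<dots> = (h ^^ m) x"
    using \<open>i \<le> m\<close> by (metis comp_apply funpow_add le_add_diff_inverse2)
  finally show ?thesis .
qed

lemma funpow_fact_card_mult:
  assumes "finite S" "\<And>y. y \<in> S \<Longrightarrow> h y \<in> S" "x \<in> S" "0 < c"
  shows "(h ^^ (fact (card S) * c)) x = (h ^^ fact (card S)) x"
proof -
  obtain i p where "0 < p" "i + p \<le> card S" and cycle: "(h ^^ (i + p)) x = (h ^^ i) x"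
    using funpow_cycle_bound[OF assms(1-3)] .
  then have "p dvd fact (card S)"
    by (simp add: dvd_fact)
  then obtain t where t: "fact (card S) * (c - 1) = t * p"
    by (metis dvd_def dvd_mult2 mult.commute)
  have "i \<le> fact (card S)"
    using \<open>i + p \<le> card S\<close> fact_ge_self[of "card S"] by linarith
  moreover have "fact (card S) * c = fact (card S) + t * p"
    using \<open>0 < c\<close> t by (metis One_nat_def Suc_pred mult_Suc_right)
  ultimately show ?thesis
    using funpow_periodic[OF cycle] by simp
qed

lemma funpow_fact_card_idem:
  assumes "finite S" "\<And>y. y \<in> S \<Longrightarrow> h y \<in> S" "x \<in> S"
  shows "(h ^^ fact (card S)) ((h ^^ fact (card S)) x) = (h ^^ fact (card S)) x"
  using funpow_fact_card_mult[OF assms, where c = 2] by (simp add: funpow_add mult_2_right)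

primrec church_body :: "nat \<Rightarrow> tm" where
  "church_body 0 = Var 0"
| "church_body (Suc n) = App (Var 1) (church_body n)"

definition church :: "ty \<Rightarrow> nat \<Rightarrow> tm" where
  "church A n = Lam (Arr A A) (Lam A (church_body n))"

lemma typing_church_body: "typing [A, Arr A A] (church_body n) A"
proof (induction n)
  case 0
  show ?case by (auto intro: t_var)
next
  case (Suc n)
  have "typing [A, Arr A A] (Var 1) (Arr A A)" by (rule t_var) auto
  with Suc show ?case by (auto intro: t_app)
qed

lemma typing_church: "typing [] (church A n) (Arr (Arr A A) (Arr A A))"
  unfolding church_def by (intro t_lam typing_church_body)

lemma sem_church_body: "sem Q (church_body n) [x, f] = (app f ^^ n) x"
  by (induction n) auto

text \<open>Only meaningful for finite \<open>S\<close> (otherwise \<open>Abs_fset\<close> yields junk); it is used with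
  \<open>S = tyint Q A\<close>, which is finite (lemma finite_tyint).\<close>
definition graph :: "val set \<Rightarrow> (val \<Rightarrow> val) \<Rightarrow> val" where
  "graph S h = Fn (Abs_fset ((\<lambda>x. (x, h x)) ` S))"

lemma app_graph: "finite S \<Longrightarrow> x \<in> S \<Longrightarrow> app (graph S h) x = h x"
  unfolding graph_def by (auto simp: Abs_fset_inverse intro!: the_equality)

lemma graph_cong: "(\<And>x. x \<in> S \<Longrightarrow> g x = h x) \<Longrightarrow> graph S g = graph S h"
  unfolding graph_def by (metis (no_types, lifting) image_cong)

lemma vcomp_graph:
  assumes "finite S" "finite T" "\<And>x. x \<in> S \<Longrightarrow> g x \<in> T"
  shows "vcomp (graph S g) (graph T h) = graph S (h \<circ> g)"
proof -
  have "fset ((\<lambda>(x, y). (x, app (graph T h) y)) |`| Abs_fset ((\<lambda>x. (x, g x)) ` S))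
      = (\<lambda>x. (x, h (g x))) ` S"
    using assms by (force simp: Abs_fset_inverse app_graph image_iff)
  then show ?thesis
    unfolding graph_def using assms(1) by (simp add: fset_inject[symmetric] Abs_fset_inverse)
qed

lemma sem_church: "sem Q (church A n) [] =
   graph (tyint Q (Arr A A)) (\<lambda>f. graph (tyint Q A) (app f ^^ n))"
  unfolding church_def graph_def by (simp add: sem_church_body)

lemma finite_fsets: "finite Z \<Longrightarrow> finite {g. fset g \<subseteq> Z}"
  by (rule inj_on_finite[of fset, where B = "Pow Z"]) (auto simp: inj_on_def fset_inject)

lemma finite_tyint: "finite Q \<Longrightarrow> finite (tyint Q A)"
proof (induction A)
  case (Arr A B)
  have "tyint Q (Arr A B) \<subseteq> Fn ` {g. fset g \<subseteq> tyint Q A \<times> tyint Q B}"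
    by auto
  with Arr show ?case
    by (metis finite_SigmaI finite_fsets finite_imageI finite_subset)
qed simp

lemma graph_tyint:
  assumes "finite Q" "\<And>x. x \<in> tyint Q A \<Longrightarrow> h x \<in> tyint Q B"
  shows "graph (tyint Q A) h \<in> tyint Q (Arr A B)"
  using assms finite_tyint[OF assms(1), of A] unfolding graph_def
  by (auto simp: Abs_fset_inverse)

lemma app_tyint:
  assumes "f \<in> tyint Q (Arr A B)" "x \<in> tyint Q A"
  shows "app f x \<in> tyint Q B"
proof -
  from assms obtain g where g: "f = Fn g" "fset g \<subseteq> tyint Q A \<times> tyint Q B"
    and "\<exists>!y. (x, y) |\<in>| g"
    by auto
  then have "(x, app f x) |\<in>| g"
    by (auto intro: theI')
  with g show ?thesis
    by auto
qed

lemma lrel_imp_tyint: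
  assumes "R \<subseteq> Q \<times> Q'" "(x, y) \<in> lrel Q Q' R A"
  shows "x \<in> tyint Q A" "y \<in> tyint Q' A"
  using assms by (cases A; auto)+

lemma profinite_tyint:
  assumes "profinite A \<theta>" "finite Q"
  shows "\<theta> Q \<in> tyint Q A"
proof -
  have "partial_surj Q Q (Id_on Q)"
    unfolding partial_surj_def by (auto simp: single_valued_def)
  with assms have "(\<theta> Q, \<theta> Q) \<in> lrel Q Q (Id_on Q) A"
    unfolding profinite_def by blast
  then show ?thesis
    by (rule lrel_imp_tyint[rotated]) auto
qed

lemma funpow_lrel:
  assumes "(f, f') \<in> lrel Q Q' R (Arr A A)" "(x, x') \<in> lrel Q Q' R A"
  shows "((app f ^^ n) x, (app f' ^^ n) x') \<in> lrel Q Q' R A"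
  using assms by (induction n) auto

definition Omega :: "ty \<Rightarrow> nat set \<Rightarrow> val" where
  "Omega A Q = sem Q (church A (fact (card (tyint Q A)))) []"

lemma Omega_in_D: "Omega A Q \<in> D Q (Arr (Arr A A) (Arr A A))"
  unfolding D_def Omega_def using typing_church by blast

lemma Omega_tyint:
  assumes "finite Q"
  shows "Omega A Q \<in> tyint Q (Arr (Arr A A) (Arr A A))"
  unfolding Omega_def sem_church
  using assms app_tyint by (intro graph_tyint funpow_closed) auto

lemma app_Omega:
  assumes "finite Q" "f \<in> tyint Q (Arr A A)"
  shows "app (Omega A Q) f = graph (tyint Q A) (app f ^^ fact (card (tyint Q A)))"
  unfolding Omega_def sem_church by (rule app_graph[OF finite_tyint[OF assms(1)] assms(2)])

lemma app_app_Omega: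
  assumes "finite Q" "f \<in> tyint Q (Arr A A)" "x \<in> tyint Q A" "0 < c"
  shows "app (app (Omega A Q) f) x = (app f ^^ (fact (card (tyint Q A)) * c)) x"
  using assms app_tyint finite_tyint
  by (simp add: app_Omega app_graph funpow_fact_card_mult)

lemma Omega_lrel:
  assumes "finite Q" "finite Q'" "partial_surj Q Q' R"
  shows "(Omega A Q, Omega A Q') \<in> lrel Q Q' R (Arr (Arr A A) (Arr A A))"
proof -
  have R: "R \<subseteq> Q \<times> Q'"
    using assms(3) by (simp add: partial_surj_def)
  define N :: nat where "N = fact (card (tyint Q A)) * fact (card (tyint Q' A))"
  have applied: "(app (app (Omega A Q) f) x, app (app (Omega A Q') f') x') \<in> lrel Q Q' R A"
    if ff': "(f, f') \<in> lrel Q Q' R (Arr A A)" and xx': "(x, x') \<in> lrel Q Q' R A"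
    for f f' x x'
  proof -
    have "app (app (Omega A Q) f) x = (app f ^^ N) x"
      using app_app_Omega[OF assms(1) lrel_imp_tyint(1)[OF R ff'] lrel_imp_tyint(1)[OF R xx']]
      by (simp add: N_def)
    moreover have "app (app (Omega A Q') f') x' = (app f' ^^ N) x'"
      using app_app_Omega[OF assms(2) lrel_imp_tyint(2)[OF R ff'] lrel_imp_tyint(2)[OF R xx']]
      by (simp add: N_def mult.commute)
    ultimately show ?thesis
      using funpow_lrel[OF ff' xx'] by simp
  qed
  have "(app (Omega A Q) f, app (Omega A Q') f') \<in> lrel Q Q' R (Arr A A)"
    if ff': "(f, f') \<in> lrel Q Q' R (Arr A A)" for f f'
  proof -
    have "app (Omega A Q) f \<in> tyint Q (Arr A A)" "app (Omega A Q') f' \<in> tyint Q' (Arr A A)"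
      using app_tyint[OF Omega_tyint[OF assms(1)] lrel_imp_tyint(1)[OF R ff']]
        app_tyint[OF Omega_tyint[OF assms(2)] lrel_imp_tyint(2)[OF R ff']] .
    with applied[OF ff'] show ?thesis
      by (simp only: lrel.simps) blast
  qed
  with Omega_tyint[OF assms(1)] Omega_tyint[OF assms(2)] show ?thesis
    by (simp only: lrel.simps) blast
qed

lemma Omega_profinite: "profinite (Arr (Arr A A) (Arr A A)) (Omega A)"
  unfolding profinite_def using Omega_in_D Omega_lrel by blast

lemma app_Omega_idem:
  assumes "finite Q" "f \<in> tyint Q (Arr A A)"
  shows "vcomp (app (Omega A Q) f) (app (Omega A Q) f) = app (Omega A Q) f"
proof -
  let ?S = "tyint Q A" and ?H = "app f ^^ fact (card (tyint Q A))"
  have "finite ?S" and closed: "\<And>x. x \<in> ?S \<Longrightarrow> app f x \<in> ?S"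
    using assms finite_tyint app_tyint by blast+
  then have "vcomp (graph ?S ?H) (graph ?S ?H) = graph ?S (?H \<circ> ?H)"
    by (intro vcomp_graph funpow_closed)
  also have "\<dots> = graph ?S ?H"
    using \<open>finite ?S\<close> closed by (intro graph_cong) (simp add: funpow_fact_card_idem)
  finally show ?thesis
    using assms by (simp add: app_Omega)
qed

theorem mainTheorem11:
  fixes A :: ty
  shows "\<exists>\<Omega>. profinite (Arr (Arr A A) (Arr A A)) \<Omega> \<and>
           (\<forall>M. profinite (Arr A A) M \<longrightarrow>
              (\<forall>Q. finite Q \<longrightarrow> pcomp (papp \<Omega> M) (papp \<Omega> M) Q = papp \<Omega> M Q))"
proof (intro exI conjI allI impI)
  show "profinite (Arr (Arr A A) (Arr A A)) (Omega A)"
    by (rule Omega_profinite)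
next
  fix M and Q :: "nat set"
  assume "profinite (Arr A A) M" and "finite Q"
  then have "M Q \<in> tyint Q (Arr A A)"
    by (rule profinite_tyint)
  with \<open>finite Q\<close> show "pcomp (papp (Omega A) M) (papp (Omega A) M) Q = papp (Omega A) M Q"
    unfolding pcomp_def papp_def by (rule app_Omega_idem)
qed

end
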